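(* Let $\zeta_5=\exp(2\pi i/5)$, $K=\mathbb{Q}(\zeta_5)\subset\mathbb{C}$, and $\mathcal{O}_K=\mathbb{Z}[\zeta_5]$ its ring of integers. Let $\sigma:K\to\mathbb{C}$ be the field embedding with $\sigma(\zeta_5)=\zeta_5^2$, and set $$\mathcal{S}=\{z\in\mathcal{O}_K : |\sigma(z)|\le 1\}\subseteq\mathbb{C}.$$ Then for every $z\in\mathcal{S}$, $$\min_{z'\in\mathcal{S}\setminus\{z\}}|z'-z|\in\left\{\tfrac{\sqrt5-1}{2},\,1\right\}.$$
   Context: Elements of $K$ are regarded as complex numbers via the inclusion $K\subset\mathbb{C}$; $|\cdot|$ is the complex absolute value. *)

theory Defs
  imports "HOL-Analysis.Analysis"
begin

definition zeta5 :: complex where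
  "zeta5 = exp (2 * of_real pi * \<i> / 5)"

text \<open>Integral coordinates with respect to the Z-basis 1, zeta, zeta^2, zeta^3 of Z[zeta].\<close>
definition coords5 :: "int \<Rightarrow> int \<Rightarrow> int \<Rightarrow> int \<Rightarrow> complex \<Rightarrow> complex" where
  "coords5 a b c d w = of_int a + of_int b * w + of_int c * w^2 + of_int d * w^3"

definition OK5 :: "complex set" where
  "OK5 = {coords5 a b c d zeta5 | a b c d. True}"

text \<open>The embedding sigma with sigma(zeta) = zeta^2, on O_K:
  sigma(a + b zeta + c zeta^2 + d zeta^3) = a + b zeta^2 + c zeta^4 + d zeta^6.\<close>
definition sigma5 :: "complex \<Rightarrow> complex" where
  "sigma5 z = (THE w. \<exists>a b c d. z = coords5 a b c d zeta5 \<and> w = coords5 a b c d (zeta5^2))"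

definition S5 :: "complex set" where
  "S5 = {z \<in> OK5. cmod (sigma5 z) \<le> 1}"

end

theory Submission
  imports Defs
begin

text \<open>Write \<open>z = a + b\<zeta> + c\<zeta>\<^sup>2 + d\<zeta>\<^sup>3\<close> and \<open>g = (\<surd>5 - 1)/2\<close>. Then
  \<open>|z|\<^sup>2 = K + M g\<close> and \<open>|\<sigma> z|\<^sup>2 = K - M - M g\<close> for integers \<open>K, M\<close>, so the product
  \<open>K\<^sup>2 - K M - M\<^sup>2\<close> is an integer, necessarily \<open>0, \<plusminus>1 (mod 5)\<close>. The difference \<open>w\<close> of two
  distinct points of \<open>S\<close> has \<open>0 < |\<sigma> w| \<le> 2\<close>, and if also \<open>|w| < 1\<close> these constraints force
  \<open>K = 1, M = -1\<close>, i.e. \<open>|w| = g\<close>. Conversely, the five directions \<open>\<zeta>\<^sup>j\<close> form a tight frame,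
  so from any point of the closed unit disc some step \<open>\<plusminus>\<zeta>\<^sup>j\<close> stays in the disc; as
  \<open>\<sigma>(\<zeta>\<^sup>3\<^sup>j) = \<zeta>\<^sup>j\<close>, this yields a neighbour at distance \<open>|\<zeta>\<^sup>3\<^sup>j| = 1\<close> of every point of \<open>S\<close>.\<close>

definition inv_golden :: real where
  "inv_golden = (sqrt 5 - 1) / 2"

lemma inv_golden_pos: "inv_golden > 0"
proof -
  have "sqrt 1 < sqrt 5" by (subst real_sqrt_less_iff) simp
  then show ?thesis by (simp add: inv_golden_def)
qed

lemma inv_golden_less_1: "inv_golden < 1"
proof -
  have "sqrt 5 < sqrt 9" by (subst real_sqrt_less_iff) simp
  then show ?thesis by (simp add: inv_golden_def)
qed

lemma inv_golden_sq: "inv_golden^2 + inv_golden = 1"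
  unfolding inv_golden_def by (simp add: power2_eq_square field_simps)

lemma inv_golden_norm_form:
  "(of_int k + of_int m * inv_golden) * (of_int k - of_int m - of_int m * inv_golden)
     = of_int (k^2 - k*m - m^2)"
proof -
  have "(of_int k + of_int m * inv_golden) * (of_int k - of_int m - of_int m * inv_golden)
      = of_int k ^2 - of_int k * of_int m - of_int m ^2 * (inv_golden^2 + inv_golden)"
    by (simp add: algebra_simps power2_eq_square)
  then show ?thesis by (simp add: inv_golden_sq)
qed

lemma sq_eq_5_mult_sq_imp_zero: "(n::int)^2 = 5 * m^2 \<Longrightarrow> m = 0"
proof (induction "nat \<bar>m\<bar>" arbitrary: n m rule: less_induct)
  case less
  have p5: "prime (5::int)" by simp
  have "5 dvd n" using less.prems p5 prime_dvd_power by (metis dvd_triv_left)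
  then obtain n' where n': "n = 5 * n'" ..
  then have "m^2 = 5 * n'^2" using less.prems by (simp add: power_mult_distrib)
  then have "5 dvd m" using p5 prime_dvd_power by (metis dvd_triv_left)
  then obtain m' where m': "m = 5 * m'" ..
  have "n'^2 = 5 * m'^2" using \<open>m^2 = 5 * n'^2\<close> m' by (simp add: power_mult_distrib)
  show "m = 0"
  proof (rule ccontr)
    assume "m \<noteq> 0"
    then have "nat \<bar>m'\<bar> < nat \<bar>m\<bar>" using m' by auto
    then have "m' = 0" using less.hyps \<open>n'^2 = 5 * m'^2\<close> by blast
    with m' \<open>m \<noteq> 0\<close> show False by simp
  qed
qed

lemma inv_golden_lin_indep:
  assumes "of_int k + of_int m * inv_golden = 0"
  shows "k = 0 \<and> m = 0"
proof -
  have "of_int (k^2 - k*m - m^2) = (0::real)"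
    using inv_golden_norm_form[of k m] assms by simp
  then have "k^2 - k*m - m^2 = 0" by (simp only: of_int_eq_0_iff)
  then have "(2*k - m)^2 = 5 * m^2"
    by (simp add: power2_eq_square algebra_simps)
  then have "m = 0" by (rule sq_eq_5_mult_sq_imp_zero)
  with assms show ?thesis by simp
qed

lemma int_golden_norm_mod5: "(k^2 - k*m - m^2) mod 5 \<in> {0, 1, 4::int}"
proof -
  have "k^2 - k*m - m^2 = 4 * (2*k - m)^2 + (- (4 * m^2 + 3 * (k^2 - k*m - m^2))) * 5"
    by (simp add: power2_eq_square algebra_simps)
  then have "(k^2 - k*m - m^2) mod 5 = 4 * ((2*k - m) mod 5)^2 mod 5"
    by (metis mod_mult_self1 mod_mult_right_eq power_mod)
  moreover have "(2*k - m) mod 5 \<in> {0, 1, 2, 3, 4}" by auto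
  ultimately show ?thesis by auto
qed

text \<open>The product \<open>u v = k\<^sup>2 - k m - m\<^sup>2\<close> is a norm, hence \<open>0, \<plusminus>1 (mod 5)\<close>; so \<open>u v = 1\<close>,
  and then the integer \<open>u + v = 2 k - m\<close> lies strictly between 2 and 5.\<close>
lemma inv_golden_small_norm:
  fixes k m :: int
  defines "u \<equiv> of_int k + of_int m * inv_golden" and "v \<equiv> of_int k - of_int m - of_int m * inv_golden"
  assumes "0 < u" "u < 1" "0 < v" "v \<le> 4"
  shows "k = 1 \<and> m = -1"
proof -
  define N where "N = k^2 - k*m - m^2"
  have uv: "u * v = of_int N"
    unfolding u_def v_def N_def by (rule inv_golden_norm_form)
  have "u * v < 4" using assms mult_strict_right_mono[of u 1 v] by linarith
  moreover have "u * v > 0" using assms by simp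
  ultimately have "N \<in> {1, 2, 3}" using uv by auto
  with int_golden_norm_mod5[of k m] have "N = 1" by (auto simp: N_def)
  define P where "P = 2*k - m"
  have P_sq: "P^2 = 4 + 5 * m^2"
    using \<open>N = 1\<close> by (simp add: P_def N_def power2_eq_square algebra_simps)
  have "of_int P = u + v" by (simp add: P_def u_def v_def)
  have "(u - 1)^2 > 0" using assms by simp
  then have "u * (u + v) > u * 2"
    using uv \<open>N = 1\<close> by (simp add: power2_eq_square algebra_simps)
  then have "u + v > 2" using \<open>0 < u\<close> mult_less_cancel_left_pos by blast
  moreover have "u + v < 5" using assms by simp
  ultimately have "P = 3 \<or> P = 4" using \<open>of_int P = u + v\<close> by auto
  moreover have "P \<noteq> 4"
  proof
    assume "P = 4"
    then have "5 * m^2 = 12" using P_sq by simp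
    then show False by presburger
  qed
  ultimately have "P = 3" by blast
  then have "m = 1 \<or> m = -1" using P_sq by (simp add: power2_eq_1_iff)
  moreover have "m \<noteq> 1"
  proof
    assume "m = 1"
    then have "k = 2" using \<open>P = 3\<close> by (simp add: P_def)
    then show False using assms \<open>m = 1\<close> inv_golden_pos by (simp add: u_def)
  qed
  ultimately show ?thesis using \<open>P = 3\<close> by (auto simp: P_def)
qed

lemma zeta5_eq_cis: "zeta5 = cis (2*pi/5)"
  unfolding zeta5_def cis_conv_exp by (simp add: algebra_simps)

lemma zeta5_pow5: "zeta5^5 = 1"
proof -
  have "cis (2*pi/5)^5 = cis (real 5 * (2*pi/5))" by (rule Complex.DeMoivre)
  then show ?thesis unfolding zeta5_eq_cis by simp
qed

lemma norm_zeta5: "cmod zeta5 = 1"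
  by (simp add: zeta5_eq_cis)

lemma norm_zeta5_power: "cmod (zeta5^j) = 1"
  by (simp add: norm_power norm_zeta5)

lemma cnj_zeta5: "cnj zeta5 = zeta5^4"
proof -
  have "zeta5 * cnj zeta5 = zeta5 * zeta5^4"
    using complex_norm_square[of zeta5] zeta5_pow5 by (simp add: norm_zeta5 flip: power_Suc)
  moreover have "zeta5 \<noteq> 0" using norm_zeta5 by auto
  ultimately show ?thesis by simp
qed

lemma zeta5_neq_1: "zeta5 \<noteq> 1"
proof -
  have "sin (2*pi/5) > 0" by (rule sin_gt_zero) auto
  then show ?thesis by (auto simp: zeta5_eq_cis complex_eq_iff)
qed

lemma zeta5_sum: "1 + zeta5 + zeta5^2 + zeta5^3 + zeta5^4 = 0"
proof -
  have "(zeta5 - 1) * (1 + zeta5 + zeta5^2 + zeta5^3 + zeta5^4) = zeta5^5 - 1"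
    by (simp add: algebra_simps eval_nat_numeral)
  with zeta5_pow5 zeta5_neq_1 show ?thesis by simp
qed

lemma zeta5_add_zeta5_pow4: "zeta5 + zeta5^4 = of_real inv_golden"
proof -
  define t where "t = 2 * cos (2*pi/5)"
  have t: "zeta5 + zeta5^4 = of_real t"
    using complex_add_cnj[of zeta5] unfolding cnj_zeta5 t_def by (simp add: zeta5_eq_cis)
  have "cos (2*pi/5) > 0" by (rule cos_gt_zero_pi) (use pi_gt_zero in linarith)+
  then have "t > 0" by (simp add: t_def)
  have "(zeta5 + zeta5^4)^2 + (zeta5 + zeta5^4) - 1 = 0"
    using zeta5_pow5 zeta5_sum by algebra
  then have "of_real (t^2 + t - 1) = (0::complex)" by (simp add: t)
  then have "t^2 + t - 1 = 0" by (simp only: of_real_eq_0_iff)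
  then have "(t - inv_golden) * (t + 1 + inv_golden) = 0"
    using inv_golden_sq by (simp add: algebra_simps power2_eq_square)
  moreover have "t + 1 + inv_golden > 0" using \<open>t > 0\<close> inv_golden_pos by simp
  ultimately show ?thesis using t by simp
qed

lemma coords5_add:
  "coords5 a b c d x + coords5 a' b' c' d' x = coords5 (a + a') (b + b') (c + c') (d + d') x"
  unfolding coords5_def by (simp add: algebra_simps)

lemma coords5_diff:
  "coords5 a b c d x - coords5 a' b' c' d' x = coords5 (a - a') (b - b') (c - c') (d - d') x"
  unfolding coords5_def by (simp add: algebra_simps)

lemma coords5_mult_of_int:
  "of_int k * coords5 a b c d x = coords5 (k * a) (k * b) (k * c) (k * d) x"
  unfolding coords5_def by (simp add: algebra_simps)

lemma coords5_root5_power: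
  obtains a b c d where
    "\<And>x::complex. x^5 = 1 \<Longrightarrow> 1 + x + x^2 + x^3 + x^4 = 0 \<Longrightarrow> coords5 a b c d x = x^k"
proof -
  have reduce: "x^k = x^(k mod 5)" if "x^5 = 1" for x :: complex
  proof -
    have "x^k = (x^5)^(k div 5) * x^(k mod 5)"
      by (simp flip: power_mult power_add)
    with that show ?thesis by simp
  qed
  have "k mod 5 \<in> {0, 1, 2, 3, 4}" by auto
  then show ?thesis
  proof (elim insertE emptyE)
    assume "k mod 5 = 0"
    then show ?thesis by (intro that[of 1 0 0 0]) (simp add: reduce coords5_def)
  next
    assume "k mod 5 = 1"
    then show ?thesis by (intro that[of 0 1 0 0]) (simp add: reduce coords5_def)
  next
    assume "k mod 5 = 2"
    then show ?thesis by (intro that[of 0 0 1 0]) (simp add: reduce coords5_def)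
  next
    assume "k mod 5 = 3"
    then show ?thesis by (intro that[of 0 0 0 1]) (simp add: reduce coords5_def)
  next
    assume "k mod 5 = 4"
    have "coords5 (-1) (-1) (-1) (-1) x = x^k" if "x^5 = 1" "1 + x + x^2 + x^3 + x^4 = 0" for x
    proof -
      have "coords5 (-1) (-1) (-1) (-1) x = x^4"
        using that(2) unfolding coords5_def by simp algebra
      with reduce that(1) \<open>k mod 5 = 4\<close> show ?thesis by simp
    qed
    then show ?thesis by (rule that)
  qed
qed

lemma norm_coords5_root5_sq:
  assumes "x^5 = 1" and "cnj x = x^4"
  shows "of_real ((cmod (coords5 a b c d x))^2) = of_int (a^2 + b^2 + c^2 + d^2)
     + of_int (a*b + b*c + c*d) * (x + x^4) + of_int (a*c + b*d + a*d) * (x^2 + x^3)"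
proof -
  have "cnj (coords5 a b c d x) = of_int a + of_int b * x^4 + of_int c * (x^4)^2 + of_int d * (x^4)^3"
    unfolding coords5_def by (simp add: assms(2))
  then have "of_real ((cmod (coords5 a b c d x))^2) = coords5 a b c d x *
     (of_int a + of_int b * x^4 + of_int c * (x^4)^2 + of_int d * (x^4)^3)"
    by (metis complex_norm_square)
  also have "\<dots> = of_int (a^2 + b^2 + c^2 + d^2)
     + of_int (a*b + b*c + c*d) * (x + x^4) + of_int (a*c + b*d + a*d) * (x^2 + x^3)"
    unfolding coords5_def using assms(1) by simp algebra
  finally show ?thesis .
qed

definition sqnorm_const :: "int \<Rightarrow> int \<Rightarrow> int \<Rightarrow> int \<Rightarrow> int" where
  "sqnorm_const a b c d = (a^2 + b^2 + c^2 + d^2) - (a*c + b*d + a*d)"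

definition sqnorm_coeff :: "int \<Rightarrow> int \<Rightarrow> int \<Rightarrow> int \<Rightarrow> int" where
  "sqnorm_coeff a b c d = (a*b + b*c + c*d) - (a*c + b*d + a*d)"

lemma norm_coords5_zeta5_sq:
  "(cmod (coords5 a b c d zeta5))^2 = sqnorm_const a b c d + sqnorm_coeff a b c d * inv_golden"
proof -
  have "of_real ((cmod (coords5 a b c d zeta5))^2)
      = (of_real (sqnorm_const a b c d + sqnorm_coeff a b c d * inv_golden) :: complex)"
    unfolding norm_coords5_root5_sq[OF zeta5_pow5 cnj_zeta5] sqnorm_const_def sqnorm_coeff_def
    using zeta5_sum zeta5_add_zeta5_pow4 zeta5_pow5 by simp algebra
  then show ?thesis by (simp only: of_real_eq_iff)
qed

lemma norm_coords5_zeta5_pow2_sq: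
  "(cmod (coords5 a b c d (zeta5^2)))^2
     = sqnorm_const a b c d - sqnorm_coeff a b c d - sqnorm_coeff a b c d * inv_golden"
proof -
  have "(zeta5^2)^5 = 1" "cnj (zeta5^2) = (zeta5^2)^4"
    using zeta5_pow5 by (simp_all add: cnj_zeta5) algebra
  have "zeta5^2 + (zeta5^2)^4 = - 1 - of_real inv_golden" "(zeta5^2)^2 + (zeta5^2)^3 = of_real inv_golden"
    using zeta5_pow5 zeta5_sum zeta5_add_zeta5_pow4 by algebra+
  have "of_real ((cmod (coords5 a b c d (zeta5^2)))^2) = (of_real (sqnorm_const a b c d
      - sqnorm_coeff a b c d - sqnorm_coeff a b c d * inv_golden) :: complex)"
    unfolding norm_coords5_root5_sq[OF \<open>(zeta5^2)^5 = 1\<close> \<open>cnj (zeta5^2) = (zeta5^2)^4\<close>]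
      sqnorm_const_def sqnorm_coeff_def \<open>zeta5^2 + (zeta5^2)^4 = _\<close> \<open>(zeta5^2)^2 + (zeta5^2)^3 = _\<close>
    by simp algebra
  then show ?thesis by (simp only: of_real_eq_iff)
qed

lemma coords5_zeta5_eq_0_iff:
  "coords5 a b c d zeta5 = 0 \<longleftrightarrow> sqnorm_const a b c d = 0 \<and> sqnorm_coeff a b c d = 0"
proof -
  have "coords5 a b c d zeta5 = 0 \<longleftrightarrow> (cmod (coords5 a b c d zeta5))^2 = 0"
    by simp
  also have "\<dots> \<longleftrightarrow> of_int (sqnorm_const a b c d) + of_int (sqnorm_coeff a b c d) * inv_golden = 0"
    by (simp only: norm_coords5_zeta5_sq)
  also have "\<dots> \<longleftrightarrow> sqnorm_const a b c d = 0 \<and> sqnorm_coeff a b c d = 0"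
    using inv_golden_lin_indep by fastforce
  finally show ?thesis .
qed

lemma coords5_zeta5_pow2_eq_0_iff:
  "coords5 a b c d (zeta5^2) = 0 \<longleftrightarrow> sqnorm_const a b c d = 0 \<and> sqnorm_coeff a b c d = 0"
proof -
  have "coords5 a b c d (zeta5^2) = 0 \<longleftrightarrow> (cmod (coords5 a b c d (zeta5^2)))^2 = 0"
    by simp
  also have "\<dots> \<longleftrightarrow>
      of_int (sqnorm_const a b c d - sqnorm_coeff a b c d) + of_int (- sqnorm_coeff a b c d) * inv_golden = 0"
    unfolding norm_coords5_zeta5_pow2_sq by (simp add: algebra_simps)
  also have "\<dots> \<longleftrightarrow> sqnorm_const a b c d = 0 \<and> sqnorm_coeff a b c d = 0"
    using inv_golden_lin_indep by fastforce
  finally show ?thesis .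
qed

lemma sigma5_coords5: "sigma5 (coords5 a b c d zeta5) = coords5 a b c d (zeta5^2)"
  unfolding sigma5_def
proof (rule the_equality)
  fix w
  assume "\<exists>a' b' c' d'. coords5 a b c d zeta5 = coords5 a' b' c' d' zeta5
    \<and> w = coords5 a' b' c' d' (zeta5^2)"
  then obtain a' b' c' d' where eq: "coords5 a b c d zeta5 = coords5 a' b' c' d' zeta5"
    and w: "w = coords5 a' b' c' d' (zeta5^2)" by blast
  from eq have "coords5 (a - a') (b - b') (c - c') (d - d') zeta5 = 0"
    by (simp flip: coords5_diff)
  then have "coords5 (a - a') (b - b') (c - c') (d - d') (zeta5^2) = 0"
    by (simp add: coords5_zeta5_eq_0_iff coords5_zeta5_pow2_eq_0_iff)
  then show "w = coords5 a b c d (zeta5^2)"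
    by (simp add: w flip: coords5_diff)
qed blast

lemma mem_S5_iff:
  "z \<in> S5 \<longleftrightarrow> (\<exists>a b c d. z = coords5 a b c d zeta5 \<and> cmod (coords5 a b c d (zeta5^2)) \<le> 1)"
  unfolding S5_def OK5_def by (auto simp: sigma5_coords5; blast)

lemma norm_coords5_less_1:
  assumes "coords5 a b c d zeta5 \<noteq> 0" and "cmod (coords5 a b c d (zeta5^2)) \<le> 2"
    and "cmod (coords5 a b c d zeta5) < 1"
  shows "cmod (coords5 a b c d zeta5) = inv_golden"
proof -
  let ?K = "sqnorm_const a b c d" and ?M = "sqnorm_coeff a b c d"
  have "0 < (cmod (coords5 a b c d zeta5))^2" "(cmod (coords5 a b c d zeta5))^2 < 1"
    using assms(1,3) by (simp_all add: power_less_one_iff)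
  moreover have "coords5 a b c d (zeta5^2) \<noteq> 0"
    using assms(1) by (simp add: coords5_zeta5_eq_0_iff coords5_zeta5_pow2_eq_0_iff)
  then have "0 < (cmod (coords5 a b c d (zeta5^2)))^2" by simp
  moreover have "(cmod (coords5 a b c d (zeta5^2)))^2 \<le> 2^2"
    using assms(2) by (intro power_mono) simp_all
  ultimately have "?K = 1 \<and> ?M = -1"
    unfolding norm_coords5_zeta5_sq norm_coords5_zeta5_pow2_sq
    by (intro inv_golden_small_norm) simp_all
  then have "(cmod (coords5 a b c d zeta5))^2 = inv_golden^2"
    using inv_golden_sq by (simp add: norm_coords5_zeta5_sq)
  then show ?thesis
    using inv_golden_pos by (simp add: power2_eq_iff_nonneg)
qed

lemma sigma5_preimage_zeta5_power:
  obtains a b c d where "coords5 a b c d (zeta5^2) = zeta5^j" and "cmod (coords5 a b c d zeta5) = 1"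
proof -
  obtain a b c d where coords:
    "\<And>x::complex. x^5 = 1 \<Longrightarrow> 1 + x + x^2 + x^3 + x^4 = 0 \<Longrightarrow> coords5 a b c d x = x^(3*j)"
    using coords5_root5_power by blast
  have "(zeta5^2)^5 = 1" "1 + zeta5^2 + (zeta5^2)^2 + (zeta5^2)^3 + (zeta5^2)^4 = 0"
    using zeta5_pow5 zeta5_sum by algebra+
  then have "coords5 a b c d (zeta5^2) = (zeta5^5)^j * zeta5^j"
    by (simp add: coords flip: power_mult power_add)
  moreover have "coords5 a b c d zeta5 = zeta5^(3*j)"
    using zeta5_pow5 zeta5_sum by (simp add: coords)
  ultimately show ?thesis
    using that zeta5_pow5 norm_zeta5_power by simp
qed

lemma sum_Re_mult_cnj_zeta5_power_sq:
  "(\<Sum>j<5. (Re (s * cnj (zeta5^j)))^2) = 5/2 * (cmod s)^2"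
proof -
  have summand: "of_real (4 * (Re (s * cnj (zeta5^j)))^2) = (s * zeta5^(4*j) + cnj s * zeta5^j)^2" for j
  proof -
    have "cnj (zeta5^j) = zeta5^(4*j)" by (simp add: cnj_zeta5 power_mult)
    then have "of_real (2 * Re (s * cnj (zeta5^j))) = s * zeta5^(4*j) + cnj s * zeta5^j"
      using cnj_add_mult_eq_Re[of s "zeta5^j"] by simp
    then show ?thesis by (metis of_real_power power_mult_distrib power2_eq_square mult_2 numeral_Bit0)
  qed
  have "of_real (4 * (\<Sum>j<5. (Re (s * cnj (zeta5^j)))^2))
      = (\<Sum>j<5. (s * zeta5^(4*j) + cnj s * zeta5^j)^2)"
    by (simp only: sum_distrib_left of_real_sum summand)
  also have "\<dots> = 10 * (s * cnj s)"
    using zeta5_pow5 zeta5_sum by (simp add: numeral_eq_Suc) algebra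
  also have "\<dots> = of_real (10 * (cmod s)^2)"
    by (simp only: of_real_mult complex_norm_square) simp
  finally show ?thesis by (simp only: of_real_eq_iff)
qed

lemma cmod_add_power2: "(cmod (s + e))^2 = (cmod s)^2 + 2 * Re (s * cnj e) + (cmod e)^2"
  by (simp only: cmod_power2) (simp add: power2_eq_square algebra_simps)

text \<open>Some direction \<open>\<zeta>\<^sup>j\<close> is within 45 degrees of the line through \<open>s\<close>, because the
  five directions form a tight frame; a unit step along it towards the origin keeps \<open>s\<close>
  in the unit disc.\<close>
lemma exists_signed_zeta5_power_step:
  assumes "cmod s \<le> 1"
  obtains j and \<epsilon> :: int where "\<epsilon> \<in> {1, -1}" and "cmod (s + of_int \<epsilon> * zeta5^j) \<le> 1"
proof -
  have "\<exists>j<5. (cmod s)^2 / 2 \<le> (Re (s * cnj (zeta5^j)))^2"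
  proof (rule ccontr)
    assume "\<not> ?thesis"
    then have "(\<Sum>j<5. (Re (s * cnj (zeta5^j)))^2) < (\<Sum>j<(5::nat). (cmod s)^2 / 2)"
      by (intro sum_strict_mono) (auto simp: lessThan_empty_iff)
    then show False unfolding sum_Re_mult_cnj_zeta5_power_sq by simp
  qed
  then obtain j where j: "(cmod s)^2 / 2 \<le> (Re (s * cnj (zeta5^j)))^2" by blast
  define r where "r = Re (s * cnj (zeta5^j))"
  define \<epsilon> where "\<epsilon> = (if r \<ge> 0 then -1 else 1 :: int)"
  have "\<epsilon> \<in> {1, -1}" by (simp add: \<epsilon>_def)
  have Re_step: "Re (s * cnj (of_int \<epsilon> * zeta5^j)) = - \<bar>r\<bar>"
    by (simp add: \<epsilon>_def r_def)
  have norm_step: "cmod (of_int \<epsilon> * zeta5^j) = 1"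
    by (simp add: \<epsilon>_def norm_mult norm_zeta5_power)
  have "(cmod s)^2 \<le> 1" using assms by (simp add: power_le_one)
  then have "((cmod s)^2)^2 \<le> (cmod s)^2"
    unfolding power2_eq_square[of "(cmod s)^2"] by (intro mult_left_le_one_le) simp_all
  also have "\<dots> \<le> (2 * \<bar>r\<bar>)^2"
    using j unfolding r_def[symmetric]
    by (simp add: power_mult_distrib) (use zero_le_power2[of r] in linarith)
  finally have "(cmod s)^2 \<le> 2 * \<bar>r\<bar>" by (rule power2_le_imp_le) simp
  then have "(cmod (s + of_int \<epsilon> * zeta5^j))^2 \<le> 1"
    unfolding cmod_add_power2 Re_step norm_step by simp
  then show ?thesis
    using that \<open>\<epsilon> \<in> {1, -1}\<close> by (simp add: power_le_one_iff)
qed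

lemma S5_neighbour_at_distance_1:
  assumes "z \<in> S5"
  shows "\<exists>z' \<in> S5 - {z}. cmod (z' - z) = 1"
proof -
  obtain a b c d where z: "z = coords5 a b c d zeta5"
    and "cmod (coords5 a b c d (zeta5^2)) \<le> 1"
    using assms mem_S5_iff by blast
  then obtain j \<epsilon> where "\<epsilon> \<in> {1, -1 :: int}"
    and step: "cmod (coords5 a b c d (zeta5^2) + of_int \<epsilon> * zeta5^j) \<le> 1"
    using exists_signed_zeta5_power_step by blast
  obtain a' b' c' d' where unit: "coords5 a' b' c' d' (zeta5^2) = zeta5^j"
    "cmod (coords5 a' b' c' d' zeta5) = 1"
    using sigma5_preimage_zeta5_power by blast
  define z' where "z' = coords5 (a + \<epsilon> * a') (b + \<epsilon> * b') (c + \<epsilon> * c') (d + \<epsilon> * d') zeta5"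
  have "z' - z = of_int \<epsilon> * coords5 a' b' c' d' zeta5"
    by (simp add: z'_def z flip: coords5_add coords5_mult_of_int)
  then have "cmod (z' - z) = 1"
    using \<open>\<epsilon> \<in> {1, -1}\<close> unit(2) by (auto simp: norm_mult)
  moreover have "cmod (coords5 (a + \<epsilon> * a') (b + \<epsilon> * b') (c + \<epsilon> * c') (d + \<epsilon> * d') (zeta5^2)) \<le> 1"
    using step unit(1) by (simp flip: coords5_add coords5_mult_of_int)
  then have "z' \<in> S5"
    unfolding mem_S5_iff z'_def by blast
  ultimately show ?thesis by auto
qed

lemma S5_distance_less_1:
  assumes "z \<in> S5" and "z' \<in> S5" and "z' \<noteq> z" and "cmod (z' - z) < 1"
  shows "cmod (z' - z) = inv_golden"
proof -
  obtain a b c d where z: "z = coords5 a b c d zeta5"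
    and \<sigma>z: "cmod (coords5 a b c d (zeta5^2)) \<le> 1"
    using assms(1) mem_S5_iff by blast
  obtain a' b' c' d' where z': "z' = coords5 a' b' c' d' zeta5"
    and \<sigma>z': "cmod (coords5 a' b' c' d' (zeta5^2)) \<le> 1"
    using assms(2) mem_S5_iff by blast
  have "cmod (coords5 a' b' c' d' (zeta5^2) - coords5 a b c d (zeta5^2)) \<le> 2"
    using \<sigma>z \<sigma>z' norm_triangle_ineq4[of "coords5 a' b' c' d' (zeta5^2)" "coords5 a b c d (zeta5^2)"]
    by linarith
  moreover have "coords5 (a' - a) (b' - b) (c' - c) (d' - d) zeta5 \<noteq> 0"
    using assms(3) by (simp add: z z' flip: coords5_diff)
  ultimately show ?thesis
    using assms(4) norm_coords5_less_1 by (simp add: z z' coords5_diff)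
qed

theorem mainTheorem1:
  assumes "z \<in> S5"
  shows "\<exists>d \<in> {(sqrt 5 - 1) / 2, 1}.
           (\<exists>z' \<in> S5 - {z}. cmod (z' - z) = d) \<and>
           (\<forall>z' \<in> S5 - {z}. d \<le> cmod (z' - z))"
proof -
  have dist_ge: "inv_golden \<le> cmod (z' - z) \<and> (cmod (z' - z) \<noteq> inv_golden \<longrightarrow> 1 \<le> cmod (z' - z))"
    if "z' \<in> S5 - {z}" for z'
    using S5_distance_less_1[OF assms, of z'] that inv_golden_less_1 by force
  show ?thesis
  proof (cases "\<exists>z' \<in> S5 - {z}. cmod (z' - z) = inv_golden")
    case True
    with dist_ge show ?thesis by (auto simp: inv_golden_def)
  next
    case False
    with dist_ge S5_neighbour_at_distance_1[OF assms] show ?thesis by auto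
  qed
qed

end
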